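(* Fix $\Delta>0$. In the $\mathrm{EDD}(\lambda)$ model with a global clock, the probability that a run of the protocol $\mathrm{CORE}(\Delta)$ is correct is at least $(1-e^{-\lambda\Delta})^n$.
   Context: Agents $i_0,i_1,\ldots,i_n$ share an accurate global clock and are connected by a complete reliable network; the delay of each message is an independent exponential random variable with parameter $\lambda$. At time $0$ the supervisor $i_0$ receives an external input. Protocol $\mathrm{CORE}(\Delta)$: at time $0$, $i_0$ sends a "trigger" message to each of $i_1,\ldots,i_n$; upon receiving the trigger, agent $i_k$ waits until the global time is at least $\Delta$ and then performs its action $\alpha_k$ (acting immediately if the trigger arrives after time $\Delta$). Letting $t_k$ be the time at which $i_k$ performs $\alpha_k$, a run is correct if $t_1\le t_2\le\cdots\le t_n<\infty$. *)

theory Defs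
  imports "HOL-Probability.Probability"
begin

text \<open>EDD model: the delay of the trigger message from i0 to agent i_k is d k.
  Under CORE(Delta), agent i_k acts at time t_k = max Delta (d k).\<close>

definition core_time :: "real \<Rightarrow> (nat \<Rightarrow> real) \<Rightarrow> nat \<Rightarrow> real" where
  "core_time \<Delta> d k = max \<Delta> (d k)"

definition core_correct :: "real \<Rightarrow> nat \<Rightarrow> (nat \<Rightarrow> real) \<Rightarrow> bool" where
  "core_correct \<Delta> n d \<longleftrightarrow> (\<forall>k. 1 \<le> k \<and> k < n \<longrightarrow> core_time \<Delta> d k \<le> core_time \<Delta> d (Suc k))"

end

theory Submission
  imports Defs
begin

text \<open>If every trigger arrives by time \<Delta>, then every agent acts exactly at time \<Delta>, so the run is
  correct. The delays are independent and each is at most \<Delta> with probability \<open>1 - exp (- l * \<Delta>)\<close>,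
  so this sufficient event already has probability \<open>(1 - exp (- l * \<Delta>)) ^ n\<close>.\<close>

lemma core_correct_if_delays_le:
  assumes "\<And>k. k \<in> {1..n} \<Longrightarrow> d k \<le> \<Delta>"
  shows "core_correct \<Delta> n d"
  using assms unfolding core_correct_def core_time_def by auto

lemma sets_core_correct:
  assumes "\<And>k. k \<in> {1..n} \<Longrightarrow> D k \<in> borel_measurable M"
  shows "{\<omega> \<in> space M. core_correct \<Delta> n (\<lambda>k. D k \<omega>)} \<in> sets M"
proof -
  have "{\<omega> \<in> space M. core_correct \<Delta> n (\<lambda>k. D k \<omega>)} =
      {\<omega> \<in> space M. \<forall>k\<in>{1..<n}. max \<Delta> (D k \<omega>) \<le> max \<Delta> (D (Suc k) \<omega>)}"
    unfolding core_correct_def core_time_def by auto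
  also have "\<dots> \<in> sets M"
  proof (rule sets.sets_Collect_finite_All)
    fix k assume "k \<in> {1..<n}"
    then have "D k \<in> borel_measurable M" "D (Suc k) \<in> borel_measurable M"
      using assms by auto
    then show "{\<omega> \<in> space M. max \<Delta> (D k \<omega>) \<le> max \<Delta> (D (Suc k) \<omega>)} \<in> sets M"
      by measurable
  qed simp
  finally show ?thesis .
qed

lemma (in prob_space) prob_indep_vars_all_le:
  fixes X :: "'i \<Rightarrow> 'a \<Rightarrow> real"
  assumes "indep_vars (\<lambda>_. borel) X I" and "finite I"
  shows "\<P>(\<omega> in M. \<forall>i\<in>I. X i \<omega> \<le> c) = (\<Prod>i\<in>I. \<P>(\<omega> in M. X i \<omega> \<le> c))"
proof (cases "I = {}")
  case True
  then show ?thesis by (simp add: prob_space)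
next
  case False
  have "{\<omega> \<in> space M. \<forall>i\<in>I. X i \<omega> \<le> c} = (\<Inter>i\<in>I. X i -` {..c} \<inter> space M)"
    using False by auto
  moreover have "\<And>i. {\<omega> \<in> space M. X i \<omega> \<le> c} = X i -` {..c} \<inter> space M"
    by auto
  ultimately show ?thesis
    using indep_varsD_finite[OF assms(1) False assms(2)] by simp
qed

theorem corollary1:
  fixes M :: "'a measure" and D :: "nat \<Rightarrow> 'a \<Rightarrow> real"
    and l \<Delta> :: real and n :: nat
  assumes "prob_space M"
    and "l > 0" and "\<Delta> > 0"
    and "prob_space.indep_vars M (\<lambda>_. borel) D {1..n}"
    and "\<And>k. k \<in> {1..n} \<Longrightarrow> distributed M lborel (D k) (exponential_density l)"
  shows "measure M {\<omega> \<in> space M. core_correct \<Delta> n (\<lambda>k. D k \<omega>)}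
           \<ge> (1 - exp (- l * \<Delta>)) ^ n"
proof -
  interpret prob_space M by fact
  have "(1 - exp (- l * \<Delta>)) ^ n = (\<Prod>k\<in>{1..n}. \<P>(\<omega> in M. D k \<omega> \<le> \<Delta>))"
    using exponential_distributedD_le[OF assms(5)] assms(2,3) by (simp add: mult.commute)
  also have "\<dots> = \<P>(\<omega> in M. \<forall>k\<in>{1..n}. D k \<omega> \<le> \<Delta>)"
    using prob_indep_vars_all_le[OF assms(4)] by simp
  also have "\<dots> \<le> measure M {\<omega> \<in> space M. core_correct \<Delta> n (\<lambda>k. D k \<omega>)}"
  proof (rule finite_measure_mono)
    show "{\<omega> \<in> space M. \<forall>k\<in>{1..n}. D k \<omega> \<le> \<Delta>}
        \<subseteq> {\<omega> \<in> space M. core_correct \<Delta> n (\<lambda>k. D k \<omega>)}"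
      by (auto intro: core_correct_if_delays_le)
    show "{\<omega> \<in> space M. core_correct \<Delta> n (\<lambda>k. D k \<omega>)} \<in> events"
      using sets_core_correct assms(4) unfolding indep_vars_def2 by blast
  qed
  finally show ?thesis .
qed

end
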